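(* Let $H=H_0+H_{\rm int}$ with $H_0,H_{\rm int}\in\mathbb C^{d\times d}$ Hermitian. Let $\lambda^{(0)}_0\le\dots\le\lambda^{(0)}_{d-1}$ be the eigenvalues of $H_0$ with orthonormal eigenvectors $\ket{\phi^{(0)}_0},\dots,\ket{\phi^{(0)}_{d-1}}$, and for $j\in\{0,\dots,d-1\}$ let $\gamma^{(0)}_j:=\min\{|\lambda^{(0)}_j-\lambda^{(0)}_{j-1}|,|\lambda^{(0)}_j-\lambda^{(0)}_{j+1}|\}$ with $\lambda^{(0)}_{-1}:=-\infty$, $\lambda^{(0)}_d:=\infty$. Let $0<t\le\frac{1}{4\|H\|}$ and $0\le\epsilon\le\|H_{\rm int}\|$, and let $\widetilde U$ be a unitary with $\|\widetilde U-e^{-iHt}\|\le\frac{t\epsilon}{9}$ (and $\frac{t\epsilon}{9}\le\frac13$). Let $\widetilde\lambda_0\le\dots\le\widetilde\lambda_{d-1}$ be the eigenvalues of the effective Hamiltonian $\widetilde H=\frac it\log\widetilde U$ with eigenvectors $\ket{\widetilde\phi_0},\dots,\ket{\widetilde\phi_{d-1}}$. If $\gamma^{(0)}_j>2\|H_{\rm int}\|$, then $$|\langle\widetilde\phi_j|\phi^{(0)}_j\rangle|^2\ge 1-\frac{\pi\|H_{\rm int}\|}{\gamma^{(0)}_j-2\|H_{\rm int}\|}.$$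
   Context: $\|\cdot\|$ is the spectral norm. For a matrix $M$ with $\|M-\mathbb 1\|<1$, $\log M:=\sum_{k=1}^\infty\frac{(-1)^{k+1}}{k}(M-\mathbb 1)^k$; under the hypotheses this converges and the effective Hamiltonian $\widetilde H=\frac it\log\widetilde U$ is Hermitian. *)

theory Defs
  imports "HOL-Analysis.Analysis" "HOL-Library.Extended_Real"
begin

text \<open>Matrices are complex d x d matrices indexed by a finite type 'n, with d = CARD('n).\<close>

definition cinner :: "complex^'n \<Rightarrow> complex^'n \<Rightarrow> complex" where
  "cinner x y = (\<Sum>i\<in>UNIV. cnj (x$i) * y$i)"

definition adjoint_mat :: "complex^'n^'n \<Rightarrow> complex^'n^'n" where
  "adjoint_mat A = (\<chi> i j. cnj (A$j$i))"

definition hermitian :: "complex^'n^'n \<Rightarrow> bool" where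
  "hermitian A \<longleftrightarrow> adjoint_mat A = A"

definition unitary :: "complex^'n^'n \<Rightarrow> bool" where
  "unitary U \<longleftrightarrow> U ** adjoint_mat U = mat 1 \<and> adjoint_mat U ** U = mat 1"

definition cscale :: "complex \<Rightarrow> complex^'n^'m \<Rightarrow> complex^'n^'m" where
  "cscale c A = (\<chi> i j. c * A$i$j)"

definition spec_norm :: "complex^'n^'n \<Rightarrow> real" where
  "spec_norm A = onorm (\<lambda>x. A *v x)"

fun mpow :: "complex^'n^'n \<Rightarrow> nat \<Rightarrow> complex^'n^'n" where
  "mpow A 0 = mat 1"
| "mpow A (Suc k) = A ** mpow A k"

definition mexp :: "complex^'n^'n \<Rightarrow> complex^'n^'n" where
  "mexp A = (\<Sum>k. cscale (1 / of_nat (fact k)) (mpow A k))"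

definition mlog :: "complex^'n^'n \<Rightarrow> complex^'n^'n" where
  "mlog M = (\<Sum>k. cscale ((-1) ^ k / of_nat (Suc k)) (mpow (M - mat 1) (Suc k)))"

definition sorted_eigensystem ::
  "complex^'n^'n \<Rightarrow> (nat \<Rightarrow> real) \<Rightarrow> (nat \<Rightarrow> complex^'n) \<Rightarrow> bool" where
  "sorted_eigensystem A lam phi \<longleftrightarrow>
     (\<forall>i j. i \<le> j \<and> j < CARD('n) \<longrightarrow> lam i \<le> lam j) \<and>
     (\<forall>i < CARD('n). A *v phi i = complex_of_real (lam i) *s phi i) \<and>
     (\<forall>i < CARD('n). \<forall>j < CARD('n). cinner (phi i) (phi j) = (if i = j then 1 else 0))"

definition gap :: "nat \<Rightarrow> (nat \<Rightarrow> real) \<Rightarrow> nat \<Rightarrow> ereal" where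
  "gap d lam j = min (if j = 0 then \<infinity> else ereal \<bar>lam j - lam (j - 1)\<bar>)
                     (if j + 1 = d then \<infinity> else ereal \<bar>lam j - lam (j + 1)\<bar>)"

end

theory Submission
  imports Defs "HOL-Complex_Analysis.Weierstrass_Factorization"
begin

(* Since t ||H|| <= 1/4, the spectrum of -itH lies in the disc of radius 1/4, on which the
   logarithm series inverts the exponential; hence log exp(-iHt) = -iHt.  The logarithm series
   is (1/(1-r))-Lipschitz on the ball ||X - 1|| <= r < 1, so the effective Hamiltonian differs
   from H by at most (8/21) eps, and from H0 by delta <= (3/2) ||Hint||.  By Weyl's inequality the
   j-th eigenvalue moves by at most delta, so every other eigenvalue of H0 keeps distance
   gamma - delta from the perturbed one.  Expanding the perturbed eigenvector in the eigenbasis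
   of H0 gives the Davis-Kahan estimate (gamma - delta)^2 (1 - overlap) <= delta^2, from which the
   claimed bound follows by elementary arithmetic.  The spectral theorem for H is obtained by
   maximising the Rayleigh quotient on orthogonal complements. *)

section \<open>The standard inner product on complex vectors\<close>

lemma cinner_add_right: "cinner x (y + z) = cinner x y + cinner x z"
  by (simp add: cinner_def sum.distrib algebra_simps)

lemma cinner_diff_right: "cinner x (y - z) = cinner x y - cinner x z"
  by (simp add: cinner_def sum_subtractf algebra_simps)

lemma cinner_add_left: "cinner (x + y) z = cinner x z + cinner y z"
  by (simp add: cinner_def sum.distrib algebra_simps)

lemma cinner_scale_right: "cinner x (c *s y) = c * cinner x y"
  by (simp add: cinner_def sum_distrib_left algebra_simps)

lemma cinner_scale_left: "cinner (c *s x) y = cnj c * cinner x y"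
  by (simp add: cinner_def sum_distrib_left algebra_simps)

lemma cinner_sum_right: "cinner x (sum f A) = (\<Sum>a\<in>A. cinner x (f a))"
  unfolding cinner_def by (simp add: sum_component sum_distrib_left) (rule sum.swap)

lemma cinner_sum_left: "cinner (sum f A) x = (\<Sum>a\<in>A. cinner (f a) x)"
  unfolding cinner_def by (simp add: sum_component sum_distrib_right) (rule sum.swap)

lemma cinner_zero_left [simp]: "cinner 0 x = 0"
  by (simp add: cinner_def)

lemma cinner_commute: "cinner y x = cnj (cinner x y)"
  by (simp add: cinner_def mult.commute)

lemma cmod_cinner_commute: "cmod (cinner y x) = cmod (cinner x y)"
  by (simp add: cinner_commute[of y x])

lemma norm_cvec_power2: "(norm (x::complex^'n))\<^sup>2 = (\<Sum>i\<in>UNIV. (cmod (x$i))\<^sup>2)"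
  by (simp add: norm_vec_def L2_set_def sum_nonneg)

lemma cinner_self: "cinner x x = complex_of_real ((norm x)\<^sup>2)"
proof -
  have "cinner x x = (\<Sum>i\<in>UNIV. complex_of_real ((cmod (x$i))\<^sup>2))"
    unfolding cinner_def by (rule sum.cong) (auto simp only: complex_norm_square mult.commute)
  then show ?thesis by (simp only: norm_cvec_power2 of_real_sum)
qed

lemma norm_cvec_scale: "norm (c *s (x::complex^'n)) = cmod c * norm x"
  unfolding norm_vec_def L2_set_def
  by (simp add: norm_mult power_mult_distrib sum_distrib_left[symmetric] real_sqrt_mult)

lemma cinner_cauchy_schwarz: "cmod (cinner x y) \<le> norm x * norm (y::complex^'n)"
proof -
  define a :: "real^'n" where "a = (\<chi> i. cmod (x$i))"
  define b :: "real^'n" where "b = (\<chi> i. cmod (y$i))"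
  have "cmod (cinner x y) \<le> (\<Sum>i\<in>UNIV. cmod (cnj (x$i) * y$i))"
    unfolding cinner_def by (rule norm_sum)
  also have "\<dots> = inner a b"
    unfolding a_def b_def inner_vec_def by (simp add: norm_mult)
  also have "\<dots> \<le> norm a * norm b"
    by (rule norm_cauchy_schwarz)
  also have "norm a * norm b = norm x * norm y"
    unfolding a_def b_def norm_vec_def by simp
  finally show ?thesis .
qed

lemma continuous_on_cinner_right: "continuous_on S (\<lambda>x. cinner w (x::complex^'n))"
  unfolding cinner_def
  by (intro continuous_intros continuous_on_compose2[OF continuous_on_id])
     (auto intro: linear_continuous_on bounded_linear_vec_nth)

lemma cinner_adjoint_mat: "cinner (A *v x) y = cinner x (adjoint_mat A *v y)"
  unfolding cinner_def adjoint_mat_def matrix_vector_mult_def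
  by (simp add: sum_distrib_left sum_distrib_right mult_ac) (rule sum.swap)

lemma hermitian_cinner: "hermitian A \<Longrightarrow> cinner (A *v x) y = cinner x (A *v y)"
  unfolding hermitian_def by (metis cinner_adjoint_mat)

lemma hermitian_cinner_self_real:
  assumes "hermitian H"
  shows "cinner x (H *v x) = complex_of_real (Re (cinner x (H *v x)))"
proof -
  have "cinner x (H *v x) = cnj (cinner x (H *v x))"
    using hermitian_cinner[OF assms, of x x] cinner_commute[of "H *v x" x] by simp
  then have "Im (cinner x (H *v x)) = 0"
    by (metis Reals_cnj_iff complex_is_Real_iff)
  then show ?thesis
    by (simp add: complex_eq_iff)
qed

lemma hermitian_add: "hermitian A \<Longrightarrow> hermitian B \<Longrightarrow> hermitian (A + B)"
  unfolding hermitian_def adjoint_mat_def by (simp add: vec_eq_iff)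

lemma cinner_cscale_self:
  "cinner (c *s x) (H *v (c *s x)) = complex_of_real ((cmod c)\<^sup>2) * cinner x (H *v x)"
proof -
  have "cinner (c *s x) (H *v (c *s x)) = (c * cnj c) * cinner x (H *v x)"
    by (simp add: vec.scale cinner_scale_left cinner_scale_right mult_ac)
  then show ?thesis
    by (simp only: complex_norm_square)
qed

section \<open>Orthonormal families\<close>

definition orthonormal :: "(nat \<Rightarrow> complex^'n) \<Rightarrow> nat \<Rightarrow> bool" where
  "orthonormal v m \<longleftrightarrow> (\<forall>i<m. \<forall>j<m. cinner (v i) (v j) = (if i = j then 1 else 0))"

lemma orthonormal_norm:
  assumes "orthonormal v m" and "i < m"
  shows "norm (v i) = 1"
proof -
  have "cinner (v i) (v i) = 1"
    using assms by (simp add: orthonormal_def)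
  then have "(norm (v i))\<^sup>2 = 1"
    by (metis cinner_self of_real_eq_1_iff)
  then show ?thesis
    using norm_ge_zero[of "v i"] by (simp add: power2_eq_1_iff)
qed

lemma sorted_eigensystemD:
  fixes A :: "complex^'n^'n"
  assumes "sorted_eigensystem A lam phi"
  shows "orthonormal phi CARD('n)"
    and "\<And>i. i < CARD('n) \<Longrightarrow> A *v phi i = complex_of_real (lam i) *s phi i"
    and "\<And>i j. i \<le> j \<Longrightarrow> j < CARD('n) \<Longrightarrow> lam i \<le> lam j"
  using assms unfolding sorted_eigensystem_def orthonormal_def by auto

lemma finite_index_bij:
  obtains g :: "'n::finite \<Rightarrow> nat" where "bij_betw g UNIV {..<CARD('n)}"
  using finite_same_card_bij[of "UNIV::'n set" "{..<CARD('n)}"] by auto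

lemma matrix_of_rows_cinner:
  "((\<chi> r. \<chi> k. cnj (w r $ k)) *v x) $ r = cinner (w r) (x::complex^'n)"
  by (simp add: matrix_vector_mult_def cinner_def)

lemma exists_orthogonal_nonzero:
  fixes w :: "nat \<Rightarrow> complex^'n"
  assumes "m < CARD('n)"
  shows "\<exists>x. x \<noteq> 0 \<and> (\<forall>i<m. cinner (w i) x = 0)"
proof -
  obtain g :: "'n \<Rightarrow> nat" where g: "bij_betw g UNIV {..<CARD('n)}"
    by (rule finite_index_bij)
  define w' where "w' r = (if g r < m then w (g r) else 0)" for r
  define M :: "complex^'n^'n" where "M = (\<chi> r. \<chi> k. cnj (w' r $ k))"
  obtain r0 where r0: "g r0 = m"
    using g assms by (metis bij_betw_iff_bijections lessThan_iff)
  have "\<not> surj ((*v) M)"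
  proof
    assume "surj ((*v) M)"
    then obtain y where "M *v y = axis r0 1"
      by (metis surjD)
    then have "(M *v y) $ r0 = 1"
      by (simp add: axis_def)
    moreover have "(M *v y) $ r0 = 0"
      unfolding M_def matrix_of_rows_cinner by (simp add: w'_def r0)
    ultimately show False
      by simp
  qed
  then have "\<not> inj ((*v) M)"
    using vec.linear_inj_imp_surj[OF matrix_vector_mul_linear_gen] by blast
  then obtain a b where ab: "a \<noteq> b" "M *v a = M *v b"
    unfolding inj_def by blast
  have Mx: "M *v (a - b) = 0"
    using ab by (simp add: matrix_vector_mult_diff_distrib)
  have "cinner (w i) (a - b) = 0" if "i < m" for i
  proof -
    have "i \<in> g ` UNIV"
      using g that assms by (auto simp: bij_betw_def)
    then obtain r where r: "g r = i"
      by blast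
    have "cinner (w i) (a - b) = (M *v (a - b)) $ r"
      unfolding M_def matrix_of_rows_cinner by (simp add: w'_def r that)
    then show ?thesis
      using Mx by simp
  qed
  moreover have "a - b \<noteq> 0"
    using ab by simp
  ultimately show ?thesis
    by blast
qed

lemma orthonormal_complete:
  fixes v :: "nat \<Rightarrow> complex^'n"
  assumes on: "orthonormal v CARD('n)" and y: "\<And>i. i < CARD('n) \<Longrightarrow> cinner (v i) y = 0"
  shows "y = 0"
proof -
  obtain g :: "'n \<Rightarrow> nat" where g: "bij_betw g UNIV {..<CARD('n)}"
    by (rule finite_index_bij)
  define M :: "complex^'n^'n" where "M = (\<chi> r. \<chi> k. cnj (v (g r) $ k))"
  have gi: "g r < CARD('n)" for r
    using g by (auto simp: bij_betw_def)
  have ginj: "g r = g s \<longleftrightarrow> r = s" for r s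
    using g by (auto simp: bij_betw_def inj_def)
  have "M *v (\<Sum>s\<in>UNIV. b$s *s v (g s)) = b" for b
  proof -
    have "(M *v (\<Sum>s\<in>UNIV. b$s *s v (g s))) $ r = b $ r" for r
    proof -
      have "(M *v (\<Sum>s\<in>UNIV. b$s *s v (g s))) $ r = (\<Sum>s\<in>UNIV. b$s * cinner (v (g r)) (v (g s)))"
        unfolding M_def matrix_of_rows_cinner by (simp add: cinner_sum_right cinner_scale_right)
      also have "\<dots> = (\<Sum>s\<in>UNIV. if s = r then b$s else 0)"
        by (rule sum.cong) (use on gi ginj in \<open>auto simp: orthonormal_def\<close>)
      finally show ?thesis
        by simp
    qed
    then show ?thesis
      by (simp add: vec_eq_iff)
  qed
  then have "surj ((*v) M)"
    by (rule surjI)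
  then have "inj ((*v) M)"
    using vec.linear_surj_imp_inj[OF matrix_vector_mul_linear_gen] by blast
  moreover have "M *v y = 0"
    by (simp add: vec_eq_iff M_def matrix_of_rows_cinner y gi)
  ultimately show "y = 0"
    by (metis injD matrix_vector_mult_0_right)
qed

lemma orthonormal_expansion:
  fixes v :: "nat \<Rightarrow> complex^'n"
  assumes on: "orthonormal v CARD('n)"
  shows "x = (\<Sum>i<CARD('n). cinner (v i) x *s v i)"
proof -
  have "cinner (v k) (x - (\<Sum>i<CARD('n). cinner (v i) x *s v i)) = 0" if k: "k < CARD('n)" for k
  proof -
    have "cinner (v k) (\<Sum>i<CARD('n). cinner (v i) x *s v i)
          = (\<Sum>i<CARD('n). if i = k then cinner (v i) x else 0)"
      unfolding cinner_sum_right cinner_scale_right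
      by (rule sum.cong) (use on k in \<open>auto simp: orthonormal_def\<close>)
    then show ?thesis
      using k by (simp add: cinner_diff_right)
  qed
  then have "x - (\<Sum>i<CARD('n). cinner (v i) x *s v i) = 0"
    by (rule orthonormal_complete[OF on])
  then show ?thesis
    by simp
qed

lemma parseval:
  fixes v :: "nat \<Rightarrow> complex^'n"
  assumes on: "orthonormal v CARD('n)"
  shows "(norm x)\<^sup>2 = (\<Sum>i<CARD('n). (cmod (cinner (v i) x))\<^sup>2)"
proof -
  have "complex_of_real ((norm x)\<^sup>2) = cinner x x"
    by (simp add: cinner_self)
  also have "\<dots> = cinner (\<Sum>i<CARD('n). cinner (v i) x *s v i) x"
    by (subst orthonormal_expansion[OF on, of x]) (rule refl)
  also have "\<dots> = (\<Sum>i<CARD('n). cnj (cinner (v i) x) * cinner (v i) x)"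
    by (simp add: cinner_sum_left cinner_scale_left)
  also have "\<dots> = (\<Sum>i<CARD('n). complex_of_real ((cmod (cinner (v i) x))\<^sup>2))"
    by (rule sum.cong) (auto simp only: complex_norm_square mult.commute)
  finally show ?thesis
    by (simp only: of_real_sum[symmetric] of_real_eq_iff)
qed

lemma parseval_remove:
  fixes v :: "nat \<Rightarrow> complex^'n"
  assumes on: "orthonormal v CARD('n)" and y: "norm y = 1" and j: "j < CARD('n)"
  shows "(\<Sum>k\<in>{..<CARD('n)} - {j}. (cmod (cinner (v k) y))\<^sup>2) = 1 - (cmod (cinner (v j) y))\<^sup>2"
  using parseval[OF on, of y] y j by (simp add: sum.remove)

lemma eigenbasis_mult_expansion:
  fixes v :: "nat \<Rightarrow> complex^'n"
  assumes on: "orthonormal v CARD('n)" and ev: "\<And>i. i < CARD('n) \<Longrightarrow> M *v v i = z i *s v i"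
  shows "M *v x = (\<Sum>i<CARD('n). (cinner (v i) x * z i) *s v i)"
proof -
  have "M *v x = M *v (\<Sum>i<CARD('n). cinner (v i) x *s v i)"
    by (subst orthonormal_expansion[OF on, of x]) (rule refl)
  then show ?thesis
    by (simp add: vec.sum vec.scale ev)
qed

lemma cinner_eigenbasis_mult:
  fixes v :: "nat \<Rightarrow> complex^'n"
  assumes on: "orthonormal v CARD('n)" and ev: "\<And>i. i < CARD('n) \<Longrightarrow> M *v v i = z i *s v i"
    and k: "k < CARD('n)"
  shows "cinner (v k) (M *v x) = z k * cinner (v k) x"
proof -
  have "cinner (v k) (M *v x) = (\<Sum>i<CARD('n). cinner (v i) x * z i * cinner (v k) (v i))"
    by (simp add: eigenbasis_mult_expansion[OF on ev] cinner_sum_right cinner_scale_right)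
  also have "\<dots> = (\<Sum>i<CARD('n). if i = k then cinner (v i) x * z i else 0)"
    by (rule sum.cong) (use on k in \<open>auto simp: orthonormal_def\<close>)
  finally show ?thesis
    using k by simp
qed

lemma quadratic_form_eigenbasis:
  fixes v :: "nat \<Rightarrow> complex^'n"
  assumes on: "orthonormal v CARD('n)"
    and ev: "\<And>i. i < CARD('n) \<Longrightarrow> A *v v i = complex_of_real (mu i) *s v i"
  shows "Re (cinner x (A *v x)) = (\<Sum>i<CARD('n). mu i * (cmod (cinner (v i) x))\<^sup>2)"
proof -
  have "cinner x (A *v x) = (\<Sum>i<CARD('n). complex_of_real (mu i) * (cinner (v i) x * cnj (cinner (v i) x)))"
    by (simp add: eigenbasis_mult_expansion[OF on ev] cinner_sum_right cinner_scale_right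
        cinner_commute[of x] mult_ac)
  also have "\<dots> = (\<Sum>i<CARD('n). complex_of_real (mu i * (cmod (cinner (v i) x))\<^sup>2))"
    by (simp only: complex_norm_square[symmetric] of_real_mult)
  finally show ?thesis
    by (simp only: of_real_sum[symmetric] Re_complex_of_real)
qed

lemma matrix_eq_on_orthonormal_basis:
  fixes v :: "nat \<Rightarrow> complex^'n" and A B :: "complex^'n^'n"
  assumes on: "orthonormal v CARD('n)" and eq: "\<And>i. i < CARD('n) \<Longrightarrow> A *v v i = B *v v i"
  shows "A = B"
proof -
  have "A *v x = B *v x" for x
  proof -
    have "A *v x = A *v (\<Sum>i<CARD('n). cinner (v i) x *s v i)"
      by (subst orthonormal_expansion[OF on, of x]) (rule refl)
    also have "\<dots> = B *v (\<Sum>i<CARD('n). cinner (v i) x *s v i)"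
      by (simp add: vec.sum vec.scale eq)
    also have "\<dots> = B *v x"
      by (subst (2) orthonormal_expansion[OF on, of x]) (rule refl)
    finally show ?thesis .
  qed
  then show ?thesis
    by (simp add: matrix_eq)
qed

section \<open>The spectral norm\<close>

lemma bounded_linear_matrix_vector_mult: "bounded_linear (\<lambda>x. (A::complex^'n^'m) *v x)"
  using linear_conv_bounded_linear matrix_vector_mul_linear by blast

lemma norm_matrix_vector_mult_le: "norm (A *v x) \<le> spec_norm A * norm x"
  unfolding spec_norm_def by (rule onorm[OF bounded_linear_matrix_vector_mult])

lemma spec_norm_le: "(\<And>x. norm (A *v x) \<le> K * norm x) \<Longrightarrow> spec_norm A \<le> K"
  unfolding spec_norm_def by (rule onorm_le)

lemma spec_norm_nonneg: "0 \<le> spec_norm A"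
  unfolding spec_norm_def by (rule onorm_pos_le[OF bounded_linear_matrix_vector_mult])

lemma eigenvalue_le_spec_norm:
  assumes "A *v v = c *s v" and "norm v = 1"
  shows "cmod c \<le> spec_norm A"
  using norm_matrix_vector_mult_le[of A v] assms by (simp add: norm_cvec_scale)

lemma cscale_matrix_vector_mult: "cscale c A *v x = c *s (A *v x)"
  by (simp add: cscale_def matrix_vector_mult_def vec_eq_iff sum_distrib_left mult.assoc)

lemma cscale_cscale: "cscale a (cscale b M) = cscale (a * b) M"
  by (simp add: cscale_def vec_eq_iff mult.assoc)

lemma cscale_one: "cscale 1 M = M"
  by (simp add: cscale_def vec_eq_iff)

lemma cscale_diff: "cscale a (X - Y) = cscale a X - cscale a Y"
  by (simp add: cscale_def vec_eq_iff algebra_simps)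

lemma spec_norm_mult: "spec_norm (A ** B) \<le> spec_norm A * spec_norm B"
proof (rule spec_norm_le)
  fix x
  have "norm ((A ** B) *v x) = norm (A *v (B *v x))"
    by (simp add: matrix_vector_mul_assoc)
  also have "\<dots> \<le> spec_norm A * norm (B *v x)"
    by (rule norm_matrix_vector_mult_le)
  also have "\<dots> \<le> spec_norm A * (spec_norm B * norm x)"
    by (intro mult_left_mono norm_matrix_vector_mult_le spec_norm_nonneg)
  finally show "norm ((A ** B) *v x) \<le> spec_norm A * spec_norm B * norm x"
    by (simp add: mult.assoc)
qed

lemma spec_norm_triangle: "spec_norm (A + B) \<le> spec_norm A + spec_norm B"
proof (rule spec_norm_le)
  fix x
  have "norm ((A + B) *v x) \<le> norm (A *v x) + norm (B *v x)"
    by (simp add: matrix_vector_mult_add_rdistrib norm_triangle_ineq)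
  also have "\<dots> \<le> spec_norm A * norm x + spec_norm B * norm x"
    by (intro add_mono norm_matrix_vector_mult_le)
  finally show "norm ((A + B) *v x) \<le> (spec_norm A + spec_norm B) * norm x"
    by (simp add: algebra_simps)
qed

lemma spec_norm_minus_commute: "spec_norm (A - B) = spec_norm (B - A)"
proof -
  have "spec_norm (A - B) \<le> spec_norm (B - A)" for A B :: "complex^'n^'n"
  proof (rule spec_norm_le)
    fix x
    have "(A - B) *v x = - ((B - A) *v x)"
      by (simp add: matrix_vector_mult_diff_rdistrib)
    then show "norm ((A - B) *v x) \<le> spec_norm (B - A) * norm x"
      using norm_matrix_vector_mult_le[of "B - A" x] by simp
  qed
  then show ?thesis
    by (meson antisym)
qed

lemma spec_norm_cscale: "spec_norm (cscale c A) \<le> cmod c * spec_norm A"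
proof (rule spec_norm_le)
  fix x
  have "norm (cscale c A *v x) = cmod c * norm (A *v x)"
    by (simp add: cscale_matrix_vector_mult norm_cvec_scale)
  also have "\<dots> \<le> cmod c * (spec_norm A * norm x)"
    by (intro mult_left_mono norm_matrix_vector_mult_le) auto
  finally show "norm (cscale c A *v x) \<le> cmod c * spec_norm A * norm x"
    by (simp add: mult.assoc)
qed

lemma spec_norm_mpow: "spec_norm (mpow A k) \<le> spec_norm A ^ k"
proof (induction k)
  case 0
  show ?case
    by simp (rule spec_norm_le, simp)
next
  case (Suc k)
  have "spec_norm (mpow A (Suc k)) \<le> spec_norm A * spec_norm (mpow A k)"
    by (simp add: spec_norm_mult)
  also have "\<dots> \<le> spec_norm A * spec_norm A ^ k"
    by (intro mult_left_mono Suc spec_norm_nonneg)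
  finally show ?case
    by simp
qed

lemma spec_norm_eigenbasis:
  fixes v :: "nat \<Rightarrow> complex^'n"
  assumes on: "orthonormal v CARD('n)" and ev: "\<And>i. i < CARD('n) \<Longrightarrow> M *v v i = z i *s v i"
    and zK: "\<And>i. i < CARD('n) \<Longrightarrow> cmod (z i) \<le> K" and K: "0 \<le> K"
  shows "spec_norm M \<le> K"
proof (rule spec_norm_le)
  fix x
  have "(norm (M *v x))\<^sup>2 = (\<Sum>i<CARD('n). (cmod (z i))\<^sup>2 * (cmod (cinner (v i) x))\<^sup>2)"
    by (simp add: parseval[OF on] cinner_eigenbasis_mult[OF on ev] norm_mult power_mult_distrib)
  also have "\<dots> \<le> (\<Sum>i<CARD('n). K\<^sup>2 * (cmod (cinner (v i) x))\<^sup>2)"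
    by (intro sum_mono mult_right_mono power_mono zK) auto
  also have "\<dots> = (K * norm x)\<^sup>2"
    by (simp add: parseval[OF on] sum_distrib_left power_mult_distrib)
  finally show "norm (M *v x) \<le> K * norm x"
    using K by (meson mult_nonneg_nonneg norm_ge_zero power2_le_imp_le)
qed

lemma cmod_entry_le_spec_norm: "cmod ((A::complex^'n^'n) $ i $ j) \<le> spec_norm A"
proof -
  have "A $ i $ j = (A *v axis j (1::complex)) $ i"
    by (simp add: matrix_vector_mult_def axis_def if_distrib cong: if_cong)
  also have "cmod \<dots> \<le> norm (A *v axis j (1::complex))"
    by (rule Finite_Cartesian_Product.norm_nth_le)
  also have "\<dots> \<le> spec_norm A * norm (axis j (1::complex))"
    by (rule norm_matrix_vector_mult_le)
  also have "norm (axis j (1::complex)) = 1"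
  proof -
    have "(\<Sum>i\<in>UNIV. (norm (axis j (1::complex) $ i))\<^sup>2) = (\<Sum>i\<in>UNIV. if i = j then 1 else 0)"
      by (rule sum.cong) (auto simp: axis_def)
    then show ?thesis
      unfolding norm_vec_def L2_set_def by simp
  qed
  finally show ?thesis
    by simp
qed

lemma norm_le_card_spec_norm: "norm (A::complex^'n^'n) \<le> real CARD('n) * real CARD('n) * spec_norm A"
proof -
  have "norm A \<le> (\<Sum>i\<in>UNIV. norm (A$i))"
    unfolding norm_vec_def by (rule L2_set_le_sum) auto
  also have "\<dots> \<le> (\<Sum>i\<in>(UNIV::'n set). \<Sum>j\<in>(UNIV::'n set). cmod (A$i$j))"
    unfolding norm_vec_def by (intro sum_mono L2_set_le_sum) auto
  also have "\<dots> \<le> (\<Sum>i\<in>(UNIV::'n set). \<Sum>j\<in>(UNIV::'n set). spec_norm A)"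
    by (intro sum_mono cmod_entry_le_spec_norm)
  finally show ?thesis
    by simp
qed

lemma summable_spec_norm_comparison:
  fixes f :: "nat \<Rightarrow> complex^'n^'n"
  assumes "\<And>k. spec_norm (f k) \<le> g k" "summable g"
  shows "summable f"
proof (rule summable_comparison_test)
  show "\<exists>N. \<forall>n\<ge>N. norm (f n) \<le> real CARD('n) * real CARD('n) * g n"
    using norm_le_card_spec_norm assms(1)
    by (meson mult_left_mono of_nat_0_le_iff order_trans zero_le_mult_iff)
  show "summable (\<lambda>n. real CARD('n) * real CARD('n) * g n)"
    by (intro summable_mult assms)
qed

lemma bounded_linear_matrix_vector_mult_left: "bounded_linear (\<lambda>M::complex^'n^'n. M *v x)"
  by (rule bounded_linearI')
     (simp_all add: vec_eq_iff matrix_vector_mult_def sum.distrib algebra_simps scaleR_sum_right)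

lemma suminf_matrix_vector_mult:
  fixes f :: "nat \<Rightarrow> complex^'n^'n"
  assumes "summable f"
  shows "suminf f *v x = (\<Sum>k. f k *v x)"
  using bounded_linear.suminf[OF bounded_linear_matrix_vector_mult_left assms] by simp

lemma spec_norm_suminf_le:
  fixes f :: "nat \<Rightarrow> complex^'n^'n"
  assumes fg: "\<And>k. spec_norm (f k) \<le> g k" and g: "summable g"
  shows "spec_norm (suminf f) \<le> suminf g"
proof (rule spec_norm_le)
  fix x
  have b: "norm (f k *v x) \<le> g k * norm x" for k
    using norm_matrix_vector_mult_le[of "f k" x] fg[of k]
    by (meson mult_right_mono norm_ge_zero order_trans)
  have sn: "summable (\<lambda>k. norm (f k *v x))"
    by (rule summable_comparison_test[OF _ summable_mult2[OF g]]) (use b in auto)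
  have "norm (suminf f *v x) = norm (\<Sum>k. f k *v x)"
    using suminf_matrix_vector_mult[OF summable_spec_norm_comparison[OF fg g]] by simp
  also have "\<dots> \<le> (\<Sum>k. norm (f k *v x))"
    by (rule summable_norm[OF sn])
  also have "\<dots> \<le> (\<Sum>k. g k * norm x)"
    by (rule suminf_le[OF b sn summable_mult2[OF g]])
  also have "\<dots> = suminf g * norm x"
    by (rule suminf_mult2[OF g, symmetric])
  finally show "norm (suminf f *v x) \<le> suminf g * norm x" .
qed

section \<open>The spectral theorem for Hermitian matrices\<close>

lemma nonpos_if_linear_le_quadratic:
  fixes a b :: real
  assumes "\<And>s. 0 < s \<Longrightarrow> 2 * s * a \<le> s\<^sup>2 * b"
  shows "a \<le> 0"
proof (rule ccontr)
  assume a: "\<not> a \<le> 0"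
  define s where "s = a / (\<bar>b\<bar> + 1)"
  have s: "0 < s"
    using a by (simp add: s_def)
  have "2 * a \<le> s * b"
    using assms[OF s] s by (simp add: power2_eq_square mult_ac)
  also have "\<dots> \<le> s * \<bar>b\<bar>"
    using s by (simp add: mult_left_mono)
  also have "\<dots> < a"
    using a by (simp add: s_def field_simps)
  finally show False
    using a by simp
qed

lemma rayleigh_maximizer_exists:
  fixes H :: "complex^'n^'n" and v :: "nat \<Rightarrow> complex^'n"
  assumes k: "k < CARD('n)"
  obtains x0 where "norm x0 = 1" and "\<forall>i<k. cinner (v i) x0 = 0"
    and "\<And>x. \<forall>i<k. cinner (v i) x = 0 \<Longrightarrow>
               Re (cinner x (H *v x)) \<le> Re (cinner x0 (H *v x0)) * (norm x)\<^sup>2"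
proof -
  define W where "W = {x::complex^'n. \<forall>i<k. cinner (v i) x = 0}"
  define f where "f x = Re (cinner x (H *v x))" for x
  have normalize: "complex_of_real (1 / norm x) *s x \<in> W \<inter> sphere 0 1" if "x \<in> W" "x \<noteq> 0" for x
    using that by (simp add: W_def norm_cvec_scale cinner_scale_right norm_divide)
  have "W = (\<Inter>i\<in>{..<k}. {x. cinner (v i) x = 0})"
    by (auto simp: W_def)
  then have "closed W"
    by (simp add: closed_INT closed_Collect_eq continuous_on_cinner_right)
  then have "compact (W \<inter> sphere 0 1)"
    by (intro closed_Int_compact compact_sphere)
  moreover have "W \<inter> sphere 0 1 \<noteq> {}"
    using exists_orthogonal_nonzero[OF k, of v] normalize unfolding W_def by blast
  moreover have "continuous_on (W \<inter> sphere 0 1) f"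
    unfolding f_def cinner_def
    by (intro continuous_intros continuous_on_compose2[OF linear_continuous_on[OF bounded_linear_vec_nth]]
        linear_continuous_on[OF bounded_linear_matrix_vector_mult]) auto
  ultimately obtain x0 where x0: "x0 \<in> W \<inter> sphere 0 1"
    and max: "\<And>y. y \<in> W \<inter> sphere 0 1 \<Longrightarrow> f y \<le> f x0"
    using continuous_attains_sup by metis
  have "f x \<le> f x0 * (norm x)\<^sup>2" if "x \<in> W" for x
  proof (cases "x = 0")
    case False
    have "f (complex_of_real (1 / norm x) *s x) = f x / (norm x)\<^sup>2"
      by (simp add: f_def cinner_cscale_self power_divide norm_divide)
    moreover have "0 < (norm x)\<^sup>2"
      using False by simp
    ultimately show ?thesis
      using max[OF normalize[OF that False]] by (simp add: field_simps)
  qed (simp add: f_def)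
  with x0 that show ?thesis
    unfolding W_def f_def by auto
qed

lemma hermitian_rayleigh_along_residual:
  fixes H :: "complex^'n^'n"
  assumes h: "hermitian H" and x0: "norm x0 = 1"
    and q: "q = Re (cinner x0 (H *v x0))" and z: "z = H *v x0 - complex_of_real q *s x0"
  shows "(norm (x0 + complex_of_real s *s z))\<^sup>2 = 1 + s\<^sup>2 * (norm z)\<^sup>2"
    and "Re (cinner (x0 + complex_of_real s *s z) (H *v (x0 + complex_of_real s *s z)))
           = q + 2 * s * (norm z)\<^sup>2 + s\<^sup>2 * Re (cinner z (H *v z))"
proof -
  have x0_x0: "cinner x0 x0 = 1"
    using x0 by (simp add: cinner_self)
  have x0_z: "cinner x0 z = 0"
    using hermitian_cinner_self_real[OF h, of x0]
    by (simp add: z q cinner_diff_right cinner_scale_right x0_x0)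
  then have z_x0: "cinner z x0 = 0"
    using cinner_commute[of x0 z] by simp
  have z_z: "cinner z z = complex_of_real ((norm z)\<^sup>2)"
    by (rule cinner_self)
  have Hx0: "H *v x0 = z + complex_of_real q *s x0"
    by (simp add: z)
  have z_Hx0: "cinner z (H *v x0) = complex_of_real ((norm z)\<^sup>2)"
    by (simp add: Hx0 cinner_add_right cinner_scale_right z_x0 z_z)
  have x0_Hz: "cinner x0 (H *v z) = complex_of_real ((norm z)\<^sup>2)"
    using hermitian_cinner[OF h, of x0 z] by (simp add: Hx0 cinner_add_left cinner_scale_left x0_z z_z)
  have x0_Hx0: "cinner x0 (H *v x0) = complex_of_real q"
    using hermitian_cinner_self_real[OF h] by (simp add: q)
  have "complex_of_real ((norm (x0 + complex_of_real s *s z))\<^sup>2)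
      = complex_of_real (1 + s\<^sup>2 * (norm z)\<^sup>2)"
    unfolding cinner_self[symmetric]
    by (simp add: cinner_add_left cinner_add_right cinner_scale_left cinner_scale_right
        x0_x0 x0_z z_x0 z_z power2_eq_square)
  then show "(norm (x0 + complex_of_real s *s z))\<^sup>2 = 1 + s\<^sup>2 * (norm z)\<^sup>2"
    by (simp only: of_real_eq_iff)
  have "cinner (x0 + complex_of_real s *s z) (H *v (x0 + complex_of_real s *s z))
      = complex_of_real (q + 2 * s * (norm z)\<^sup>2) + complex_of_real (s\<^sup>2) * cinner z (H *v z)"
    by (simp add: vec.add vec.scale cinner_add_left cinner_add_right cinner_scale_left cinner_scale_right
        x0_Hx0 z_Hx0 x0_Hz power2_eq_square algebra_simps)
  then show "Re (cinner (x0 + complex_of_real s *s z) (H *v (x0 + complex_of_real s *s z)))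
      = q + 2 * s * (norm z)\<^sup>2 + s\<^sup>2 * Re (cinner z (H *v z))"
    by simp
qed

lemma hermitian_rayleigh_maximizer_eigenvector:
  fixes H :: "complex^'n^'n" and v :: "nat \<Rightarrow> complex^'n"
  assumes h: "hermitian H"
    and ev: "\<And>i. i < k \<Longrightarrow> H *v v i = complex_of_real (mu i) *s v i"
    and x0: "norm x0 = 1" "\<forall>i<k. cinner (v i) x0 = 0"
    and max: "\<And>x. \<forall>i<k. cinner (v i) x = 0 \<Longrightarrow> Re (cinner x (H *v x)) \<le> q * (norm x)\<^sup>2"
    and q: "q = Re (cinner x0 (H *v x0))"
  shows "H *v x0 = complex_of_real q *s x0"
proof -
  define z where "z = H *v x0 - complex_of_real q *s x0"
  note expansion = hermitian_rayleigh_along_residual[OF h x0(1) q z_def]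
  have z_orth: "cinner (v i) z = 0" if "i < k" for i
  proof -
    have "cinner (v i) (H *v x0) = cinner (H *v v i) x0"
      using hermitian_cinner[OF h] by simp
    also have "\<dots> = 0"
      using ev[OF that] x0 that by (simp add: cinner_scale_left)
    finally show ?thesis
      using x0 that by (simp add: z_def cinner_diff_right cinner_scale_right)
  qed
  \<comment> \<open>Moving from x0 towards the residual z raises the Rayleigh quotient by 2 s |z|^2
      at first order.\<close>
  have "2 * s * (norm z)\<^sup>2 \<le> s\<^sup>2 * (q * (norm z)\<^sup>2 - Re (cinner z (H *v z)))" if "0 < s" for s
  proof -
    have "\<forall>i<k. cinner (v i) (x0 + complex_of_real s *s z) = 0"
      using x0 z_orth by (simp add: cinner_add_right cinner_scale_right)
    then have "q + 2 * s * (norm z)\<^sup>2 + s\<^sup>2 * Re (cinner z (H *v z)) \<le> q * (1 + s\<^sup>2 * (norm z)\<^sup>2)"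
      using max[of "x0 + complex_of_real s *s z"] by (simp only: expansion)
    then show ?thesis
      by (simp add: algebra_simps)
  qed
  then have "(norm z)\<^sup>2 \<le> 0"
    by (rule nonpos_if_linear_le_quadratic)
  then show ?thesis
    by (simp add: z_def)
qed

lemma hermitian_orthonormal_eigenvectors:
  fixes H :: "complex^'n^'n"
  assumes h: "hermitian H"
  shows "k \<le> CARD('n) \<Longrightarrow>
           \<exists>v mu. orthonormal v k \<and> (\<forall>i<k. H *v v i = complex_of_real (mu i) *s v i)"
proof (induction k)
  case 0
  show ?case
    by (simp add: orthonormal_def)
next
  case (Suc k)
  then obtain v mu where on: "orthonormal v k"
    and ev: "\<forall>i<k. H *v v i = complex_of_real (mu i) *s v i"
    by auto
  obtain x where x: "norm x = 1" "\<forall>i<k. cinner (v i) x = 0"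
    and max: "\<And>y. \<forall>i<k. cinner (v i) y = 0 \<Longrightarrow>
                  Re (cinner y (H *v y)) \<le> Re (cinner x (H *v x)) * (norm y)\<^sup>2"
    using rayleigh_maximizer_exists[of k v H] Suc.prems by auto
  define q where "q = Re (cinner x (H *v x))"
  have Hx: "H *v x = complex_of_real q *s x"
    using hermitian_rayleigh_maximizer_eigenvector[OF h _ x max[folded q_def] q_def] ev by blast
  have "orthonormal (v(k := x)) (Suc k)"
    unfolding orthonormal_def
  proof (intro allI impI)
    fix i j
    assume "i < Suc k" "j < Suc k"
    then show "cinner ((v(k := x)) i) ((v(k := x)) j) = (if i = j then 1 else 0)"
      using on x cinner_commute[of x "v i" for i] unfolding orthonormal_def
      by (cases "i = k"; cases "j = k") (auto simp: cinner_self less_Suc_eq)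
  qed
  moreover have "\<forall>i<Suc k. H *v (v(k := x)) i = complex_of_real ((mu(k := q)) i) *s (v(k := x)) i"
    using ev Hx by (auto simp: less_Suc_eq)
  ultimately show ?case
    by blast
qed

lemma hermitian_spectral_theorem:
  fixes H :: "complex^'n^'n"
  assumes "hermitian H"
  obtains v mu where "orthonormal v CARD('n)"
    and "\<And>i. i < CARD('n) \<Longrightarrow> H *v v i = complex_of_real (mu i) *s v i"
  using hermitian_orthonormal_eigenvectors[OF assms, of "CARD('n)"] by auto

section \<open>Matrix exponential and logarithm\<close>

lemma mpow_eigenvector: "A *v v = c *s v \<Longrightarrow> mpow A k *v v = c ^ k *s v"
  by (induction k) (simp_all add: matrix_vector_mul_assoc[symmetric] vec.scale)

lemma cscale_eigenvector: "A *v v = c *s v \<Longrightarrow> cscale a A *v v = (a * c) *s v"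
  by (simp add: cscale_matrix_vector_mult vector_smult_assoc)

lemma sums_cvec_scale: "f sums s \<Longrightarrow> (\<lambda>k. f k *s (v::complex^'n)) sums (s *s v)"
  by (rule bounded_linear.sums[OF bounded_linearI']) (simp_all add: vec_eq_iff algebra_simps)

lemma summable_mexp_series: "summable (\<lambda>k. cscale (1 / of_nat (fact k)) (mpow (A::complex^'n^'n) k))"
proof (rule summable_spec_norm_comparison)
  fix k
  have "spec_norm (cscale (1 / of_nat (fact k)) (mpow A k)) \<le> inverse (fact k) * spec_norm (mpow A k)"
    using spec_norm_cscale[of "1 / of_nat (fact k)" "mpow A k"] by (simp add: norm_divide field_simps)
  also have "\<dots> \<le> inverse (fact k) * spec_norm A ^ k"
    by (intro mult_left_mono spec_norm_mpow) simp
  finally show "spec_norm (cscale (1 / of_nat (fact k)) (mpow A k)) \<le> inverse (fact k) * spec_norm A ^ k" .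
  show "summable (\<lambda>k. inverse (fact k) * spec_norm A ^ k)"
    by (rule summable_exp)
qed

lemma mexp_eigenvector:
  fixes A :: "complex^'n^'n"
  assumes "A *v v = c *s v"
  shows "mexp A *v v = exp c *s v"
proof -
  have "mexp A *v v = (\<Sum>k. cscale (1 / of_nat (fact k)) (mpow A k) *v v)"
    unfolding mexp_def by (rule suminf_matrix_vector_mult[OF summable_mexp_series])
  also have "\<dots> = (\<Sum>k. (c ^ k /\<^sub>R fact k) *s v)"
    by (simp add: cscale_matrix_vector_mult mpow_eigenvector[OF assms] scaleR_conv_of_real
        divide_inverse mult_ac)
  also have "\<dots> = exp c *s v"
    using sums_cvec_scale[OF exp_converges] by (rule sums_unique[symmetric])
  finally show ?thesis .
qed

abbreviation mlog_coeff :: "nat \<Rightarrow> complex" where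
  "mlog_coeff k \<equiv> (-1) ^ k / of_nat (Suc k)"

lemma cmod_mlog_coeff: "cmod (mlog_coeff k) = 1 / real (Suc k)"
  by (simp only: norm_divide norm_power norm_minus_cancel norm_one power_one norm_of_nat)

lemma summable_mlog_series:
  fixes M :: "complex^'n^'n"
  assumes "spec_norm (M - mat 1) < 1"
  shows "summable (\<lambda>k. cscale (mlog_coeff k) (mpow (M - mat 1) (Suc k)))"
proof (rule summable_spec_norm_comparison)
  fix k
  let ?r = "spec_norm (M - mat 1)"
  have "spec_norm (cscale (mlog_coeff k) (mpow (M - mat 1) (Suc k)))
      \<le> cmod (mlog_coeff k) * spec_norm (mpow (M - mat 1) (Suc k))"
    by (rule spec_norm_cscale)
  also have "\<dots> \<le> 1 * ?r ^ Suc k"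
    unfolding cmod_mlog_coeff by (intro mult_mono spec_norm_mpow spec_norm_nonneg) auto
  finally show "spec_norm (cscale (mlog_coeff k) (mpow (M - mat 1) (Suc k))) \<le> ?r ^ Suc k"
    by simp
  show "summable (\<lambda>k. ?r ^ Suc k)"
    using assms spec_norm_nonneg[of "M - mat 1"] by simp
qed

lemma mlog_eigenvector:
  fixes M :: "complex^'n^'n"
  assumes M: "spec_norm (M - mat 1) < 1" and ev: "M *v v = c *s v" and c: "cmod (c - 1) < 1"
  shows "mlog M *v v = Ln c *s v"
proof -
  have evN: "(M - mat 1) *v v = (c - 1) *s v"
    using ev by (simp add: matrix_vector_mult_diff_rdistrib vec.scale algebra_simps)
  have "(\<lambda>n. - ((-(c - 1)) ^ Suc n) / of_nat (Suc n)) sums Ln c"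
    using Ln_series'[OF c] by (subst sums_Suc_iff) simp
  moreover have "- ((-(c - 1)) ^ Suc n) / of_nat (Suc n) = mlog_coeff n * (c - 1) ^ Suc n" for n
    by (subst power_minus) (simp add: field_simps)
  ultimately have series: "(\<lambda>n. mlog_coeff n * (c - 1) ^ Suc n) sums Ln c"
    by simp
  have "mlog M *v v = (\<Sum>k. cscale (mlog_coeff k) (mpow (M - mat 1) (Suc k)) *v v)"
    unfolding mlog_def by (rule suminf_matrix_vector_mult[OF summable_mlog_series[OF M]])
  also have "\<dots> = (\<Sum>k. (mlog_coeff k * (c - 1) ^ Suc k) *s v)"
    by (simp only: cscale_matrix_vector_mult mpow_eigenvector[OF evN] vector_smult_assoc)
  also have "\<dots> = Ln c *s v"
    using sums_cvec_scale[OF series] by (rule sums_unique[symmetric])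
  finally show ?thesis .
qed

lemma spec_norm_mpow_diff:
  fixes P Q :: "complex^'n^'n"
  assumes P: "spec_norm P \<le> r" and Q: "spec_norm Q \<le> r"
  shows "spec_norm (mpow P (Suc k) - mpow Q (Suc k)) \<le> real (Suc k) * r ^ k * spec_norm (P - Q)"
proof (induction k)
  case 0
  show ?case
    by simp
next
  case (Suc k)
  let ?D = "mpow P (Suc k) - mpow Q (Suc k)"
  have r: "0 \<le> r"
    using P spec_norm_nonneg order_trans by blast
  have "mpow P (Suc (Suc k)) - mpow Q (Suc (Suc k)) = P ** ?D + (P - Q) ** mpow Q (Suc k)"
    by (simp add: matrix_eq matrix_vector_mul_assoc[symmetric] matrix_vector_mult_add_rdistrib
        matrix_vector_mult_diff_rdistrib matrix_vector_mult_diff_distrib)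
  then have "spec_norm (mpow P (Suc (Suc k)) - mpow Q (Suc (Suc k)))
      \<le> spec_norm (P ** ?D) + spec_norm ((P - Q) ** mpow Q (Suc k))"
    by (simp only: spec_norm_triangle)
  also have "\<dots> \<le> spec_norm P * spec_norm ?D + spec_norm (P - Q) * spec_norm (mpow Q (Suc k))"
    by (intro add_mono spec_norm_mult)
  also have "\<dots> \<le> r * (real (Suc k) * r ^ k * spec_norm (P - Q)) + spec_norm (P - Q) * r ^ Suc k"
    using spec_norm_mpow[of Q "Suc k"] power_mono[OF Q spec_norm_nonneg, of "Suc k"]
    by (intro add_mono mult_mono Suc P order.refl spec_norm_nonneg) (auto simp: r)
  also have "\<dots> = real (Suc (Suc k)) * r ^ Suc k * spec_norm (P - Q)"
    by (simp add: algebra_simps)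
  finally show ?case .
qed

lemma spec_norm_mlog_diff:
  fixes X Y :: "complex^'n^'n"
  assumes X: "spec_norm (X - mat 1) \<le> r" and Y: "spec_norm (Y - mat 1) \<le> r" and r: "r < 1"
  shows "spec_norm (mlog X - mlog Y) \<le> spec_norm (X - Y) / (1 - r)"
proof -
  let ?P = "X - mat 1" and ?Q = "Y - mat 1"
  have r0: "0 \<le> r"
    using X spec_norm_nonneg order_trans by blast
  have "mlog X - mlog Y
      = (\<Sum>k. cscale (mlog_coeff k) (mpow ?P (Suc k)) - cscale (mlog_coeff k) (mpow ?Q (Suc k)))"
    unfolding mlog_def using X Y r by (intro suminf_diff summable_mlog_series) auto
  also have "spec_norm \<dots> \<le> (\<Sum>k. r ^ k * spec_norm (X - Y))"
  proof (rule spec_norm_suminf_le)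
    fix k
    have "spec_norm (cscale (mlog_coeff k) (mpow ?P (Suc k)) - cscale (mlog_coeff k) (mpow ?Q (Suc k)))
        \<le> cmod (mlog_coeff k) * spec_norm (mpow ?P (Suc k) - mpow ?Q (Suc k))"
      by (metis cscale_diff spec_norm_cscale)
    also have "\<dots> \<le> 1 / real (Suc k) * (real (Suc k) * r ^ k * spec_norm (X - Y))"
      using spec_norm_mpow_diff[OF X Y, of k] unfolding cmod_mlog_coeff by (intro mult_left_mono) auto
    finally show "spec_norm (cscale (mlog_coeff k) (mpow ?P (Suc k)) - cscale (mlog_coeff k) (mpow ?Q (Suc k)))
        \<le> r ^ k * spec_norm (X - Y)"
      by simp
    show "summable (\<lambda>k. r ^ k * spec_norm (X - Y))"
      using r r0 by (intro summable_mult2) simp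
  qed
  also have "\<dots> = spec_norm (X - Y) / (1 - r)"
    using r r0 suminf_mult2[of "\<lambda>k. r ^ k" "spec_norm (X - Y)"] suminf_geometric[of r] by simp
  finally show ?thesis .
qed

lemma spec_norm_mexp_minus_one:
  fixes A :: "complex^'n^'n" and v :: "nat \<Rightarrow> complex^'n"
  assumes on: "orthonormal v CARD('n)" and ev: "\<And>i. i < CARD('n) \<Longrightarrow> A *v v i = z i *s v i"
    and z: "\<And>i. i < CARD('n) \<Longrightarrow> cmod (z i) \<le> r" and r: "r \<le> 1/2"
  shows "spec_norm (mexp A - mat 1) \<le> 3/2 * r"
proof (rule spec_norm_eigenbasis[OF on])
  fix i
  assume i: "i < CARD('n)"
  show "(mexp A - mat 1) *v v i = (exp (z i) - 1) *s v i"
    by (simp add: matrix_vector_mult_diff_rdistrib mexp_eigenvector[OF ev[OF i]] vec_eq_iff algebra_simps)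
  have "cmod (exp (z i) - 1) \<le> 3/2 * cmod (z i)"
    using z[OF i] r by (intro norm_exp_bounds(2)) simp
  then show "cmod (exp (z i) - 1) \<le> 3/2 * r"
    using z[OF i] by simp
next
  show "0 \<le> 3/2 * r"
    using order_trans[OF norm_ge_zero z[of 0]] by simp
qed

lemma mlog_mexp:
  fixes A :: "complex^'n^'n" and v :: "nat \<Rightarrow> complex^'n"
  assumes on: "orthonormal v CARD('n)" and ev: "\<And>i. i < CARD('n) \<Longrightarrow> A *v v i = z i *s v i"
    and z: "\<And>i. i < CARD('n) \<Longrightarrow> cmod (z i) \<le> 1/2"
  shows "mlog (mexp A) = A"
proof (rule matrix_eq_on_orthonormal_basis[OF on])
  fix i
  assume i: "i < CARD('n)"
  have "spec_norm (mexp A - mat 1) \<le> 3/2 * (1/2)"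
    by (rule spec_norm_mexp_minus_one[OF on ev z]) auto
  moreover have "cmod (exp (z i) - 1) \<le> 3/2 * cmod (z i)"
    using z[OF i] by (intro norm_exp_bounds(2)) simp
  ultimately have "mlog (mexp A) *v v i = Ln (exp (z i)) *s v i"
    using z[OF i] by (intro mlog_eigenvector mexp_eigenvector ev i) auto
  moreover have "Ln (exp (z i)) = z i"
    using z[OF i] abs_Im_le_cmod[of "z i"] pi_gt3 by (intro Ln_exp) auto
  ultimately show "mlog (mexp A) *v v i = A *v v i"
    using ev[OF i] by simp
qed

section \<open>Perturbation of eigenvalues and eigenvectors\<close>

lemma eigenvalue_le_rayleigh:
  fixes A :: "complex^'n^'n"
  assumes a: "sorted_eigensystem A al a" and j: "j < CARD('n)"
    and x: "\<And>i. i < j \<Longrightarrow> cinner (a i) x = 0"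
  shows "al j * (norm x)\<^sup>2 \<le> Re (cinner x (A *v x))"
proof -
  note on = sorted_eigensystemD(1)[OF a] and ev = sorted_eigensystemD(2)[OF a]
    and sorted = sorted_eigensystemD(3)[OF a]
  have "al j * (norm x)\<^sup>2 = (\<Sum>i<CARD('n). al j * (cmod (cinner (a i) x))\<^sup>2)"
    by (simp add: parseval[OF on] sum_distrib_left)
  also have "\<dots> \<le> (\<Sum>i<CARD('n). al i * (cmod (cinner (a i) x))\<^sup>2)"
  proof (rule sum_mono)
    fix i
    assume "i \<in> {..<CARD('n)}"
    then show "al j * (cmod (cinner (a i) x))\<^sup>2 \<le> al i * (cmod (cinner (a i) x))\<^sup>2"
      using x[of i] sorted[of j i] by (cases "i < j") (auto intro: mult_right_mono)
  qed
  also have "\<dots> = Re (cinner x (A *v x))"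
    by (rule quadratic_form_eigenbasis[OF on ev, symmetric])
  finally show ?thesis .
qed

lemma rayleigh_le_eigenvalue:
  fixes B :: "complex^'n^'n"
  assumes b: "sorted_eigensystem B be b" and j: "j < CARD('n)"
    and x: "\<And>i. j < i \<Longrightarrow> i < CARD('n) \<Longrightarrow> cinner (b i) x = 0"
  shows "Re (cinner x (B *v x)) \<le> be j * (norm x)\<^sup>2"
proof -
  note on = sorted_eigensystemD(1)[OF b] and ev = sorted_eigensystemD(2)[OF b]
    and sorted = sorted_eigensystemD(3)[OF b]
  have "Re (cinner x (B *v x)) = (\<Sum>i<CARD('n). be i * (cmod (cinner (b i) x))\<^sup>2)"
    by (rule quadratic_form_eigenbasis[OF on ev])
  also have "\<dots> \<le> (\<Sum>i<CARD('n). be j * (cmod (cinner (b i) x))\<^sup>2)"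
  proof (rule sum_mono)
    fix i
    assume "i \<in> {..<CARD('n)}"
    then show "be i * (cmod (cinner (b i) x))\<^sup>2 \<le> be j * (cmod (cinner (b i) x))\<^sup>2"
      using x[of i] sorted[of i j] j by (cases "j < i") (auto intro: mult_right_mono)
  qed
  also have "\<dots> = be j * (norm x)\<^sup>2"
    by (simp add: parseval[OF on] sum_distrib_left)
  finally show ?thesis .
qed

lemma cinner_diff_quadratic_forms_le:
  "Re (cinner x (A *v x)) - Re (cinner x (B *v x)) \<le> spec_norm (A - B) * (norm x)\<^sup>2"
proof -
  have "Re (cinner x (A *v x)) - Re (cinner x (B *v x)) = Re (cinner x ((A - B) *v x))"
    by (simp add: matrix_vector_mult_diff_rdistrib cinner_diff_right)
  also have "\<dots> \<le> norm x * norm ((A - B) *v x)"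
    using complex_Re_le_cmod cinner_cauchy_schwarz order_trans by blast
  also have "\<dots> \<le> norm x * (spec_norm (A - B) * norm x)"
    by (intro mult_left_mono norm_matrix_vector_mult_le) auto
  finally show ?thesis
    by (simp add: power2_eq_square mult_ac)
qed

lemma weyl_eigenvalue_le:
  fixes A B :: "complex^'n^'n"
  assumes a: "sorted_eigensystem A al a" and b: "sorted_eigensystem B be b" and j: "j < CARD('n)"
  shows "al j \<le> be j + spec_norm (A - B)"
proof -
  \<comment> \<open>Test the two quadratic forms on a vector orthogonal to a 0, ..., a (j-1) and to
      b (j+1), ..., b (n-1): these are only n - 1 constraints.\<close>
  define w where "w k = (if k < j then a k else b (k + 1))" for k
  obtain x where x0: "x \<noteq> 0" and xw: "\<forall>k<CARD('n) - 1. cinner (w k) x = 0"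
    using exists_orthogonal_nonzero[of "CARD('n) - 1" w] by auto
  have "cinner (a i) x = 0" if "i < j" for i
    using xw[rule_format, of i] that j by (simp add: w_def)
  then have lower: "al j * (norm x)\<^sup>2 \<le> Re (cinner x (A *v x))"
    by (rule eigenvalue_le_rayleigh[OF a j])
  have "cinner (b i) x = 0" if "j < i" "i < CARD('n)" for i
  proof -
    have "i - 1 < CARD('n) - 1" "\<not> i - 1 < j" "i - 1 + 1 = i"
      using that by auto
    then show ?thesis
      using xw[rule_format, of "i - 1"] by (simp add: w_def)
  qed
  then have upper: "Re (cinner x (B *v x)) \<le> be j * (norm x)\<^sup>2"
    by (rule rayleigh_le_eigenvalue[OF b j])
  have "al j * (norm x)\<^sup>2 \<le> (be j + spec_norm (A - B)) * (norm x)\<^sup>2"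
    using lower upper cinner_diff_quadratic_forms_le[of x A B] by (simp add: algebra_simps)
  then show ?thesis
    using x0 by simp
qed

lemma weyl_inequality:
  fixes A B :: "complex^'n^'n"
  assumes "sorted_eigensystem A al a" and "sorted_eigensystem B be b" and "j < CARD('n)"
  shows "\<bar>al j - be j\<bar> \<le> spec_norm (A - B)"
  using weyl_eigenvalue_le[OF assms] weyl_eigenvalue_le[OF assms(2,1,3)] spec_norm_minus_commute[of A B]
  by linarith

lemma davis_kahan_overlap:
  fixes A B :: "complex^'n^'n" and phi :: "nat \<Rightarrow> complex^'n"
  assumes on: "orthonormal phi CARD('n)"
    and ev: "\<And>i. i < CARD('n) \<Longrightarrow> A *v phi i = complex_of_real (lam i) *s phi i"
    and y: "B *v y = complex_of_real mu *s y" "norm y = 1" and j: "j < CARD('n)"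
    and g: "0 \<le> g" and sep: "\<And>k. k < CARD('n) \<Longrightarrow> k \<noteq> j \<Longrightarrow> g \<le> \<bar>lam k - mu\<bar>"
  shows "g\<^sup>2 * (1 - (cmod (cinner (phi j) y))\<^sup>2) \<le> (spec_norm (A - B))\<^sup>2"
proof -
  let ?c = "\<lambda>k. (cmod (cinner (phi k) y))\<^sup>2"
  have coeff: "cinner (phi k) ((A - B) *v y) = complex_of_real (lam k - mu) * cinner (phi k) y"
    if "k < CARD('n)" for k
    using cinner_eigenbasis_mult[OF on ev that, of y] y(1)
    by (simp add: matrix_vector_mult_diff_rdistrib cinner_diff_right cinner_scale_right algebra_simps)
  have "g\<^sup>2 * (1 - ?c j) = (\<Sum>k\<in>{..<CARD('n)} - {j}. g\<^sup>2 * ?c k)"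
    by (simp add: sum_distrib_left[symmetric] parseval_remove[OF on y(2) j])
  also have "\<dots> \<le> (\<Sum>k\<in>{..<CARD('n)} - {j}. (lam k - mu)\<^sup>2 * ?c k)"
  proof (rule sum_mono)
    fix k
    assume "k \<in> {..<CARD('n)} - {j}"
    then have "g\<^sup>2 \<le> \<bar>lam k - mu\<bar>\<^sup>2"
      using sep g by (intro power_mono) auto
    then show "g\<^sup>2 * ?c k \<le> (lam k - mu)\<^sup>2 * ?c k"
      by (intro mult_right_mono) auto
  qed
  also have "\<dots> \<le> (\<Sum>k<CARD('n). (lam k - mu)\<^sup>2 * ?c k)"
    by (rule sum_mono2) auto
  also have "\<dots> = (norm ((A - B) *v y))\<^sup>2"
    by (simp add: parseval[OF on] coeff norm_mult power_mult_distrib del: of_real_diff)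
  also have "\<dots> \<le> (spec_norm (A - B))\<^sup>2"
    using norm_matrix_vector_mult_le[of "A - B" y] y(2) by (simp add: power_mono)
  finally show ?thesis .
qed

lemma gap_le_eigenvalue_dist:
  assumes sorted: "\<And>i k. i \<le> k \<Longrightarrow> k < d \<Longrightarrow> lam i \<le> (lam k :: real)"
    and k: "k < d" "k \<noteq> j" and j: "j < d"
  shows "gap d lam j \<le> ereal \<bar>lam j - lam k\<bar>"
proof (cases "k < j")
  case True
  have "lam k \<le> lam (j - 1)" "lam (j - 1) \<le> lam j"
    using True j by (auto intro: sorted)
  then have "\<bar>lam j - lam (j - 1)\<bar> \<le> \<bar>lam j - lam k\<bar>"
    by simp
  then show ?thesis
    unfolding gap_def using True by (simp add: min.coboundedI1)
next
  case False
  then have "j < k"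
    using k by simp
  have "lam (j + 1) \<le> lam k" "lam j \<le> lam (j + 1)"
    using \<open>j < k\<close> k by (auto intro: sorted)
  then have "\<bar>lam j - lam (j + 1)\<bar> \<le> \<bar>lam j - lam k\<bar>"
    by simp
  then show ?thesis
    unfolding gap_def using \<open>j < k\<close> k by (simp add: min.coboundedI2)
qed

(* The factor pi is not sharp: the proof only uses 9/4 <= pi^2, and R <= 1 when g - 2h <= pi h. *)
lemma deficit_le_pi_ratio:
  fixes h d g R :: real
  assumes h: "0 \<le> h" and d: "0 \<le> d" "d \<le> 3/2 * h" and g: "2 * h < g"
    and R: "0 \<le> R" "R \<le> 1" and key: "(g - d)\<^sup>2 * R \<le> d\<^sup>2"
  shows "R \<le> pi * h / (g - 2 * h)"
proof -
  define u where "u = g - 2 * h"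
  have u: "0 < u"
    using g by (simp add: u_def)
  have "R * u \<le> pi * h"
  proof (cases "u \<le> pi * h")
    case True
    then show ?thesis
      using mult_left_le_one_le[OF less_imp_le[OF u] R] by linarith
  next
    case False
    have "R * u\<^sup>2 \<le> R * (g - d)\<^sup>2"
      using d h u R(1) by (intro mult_left_mono power_mono) (auto simp: u_def)
    also have "\<dots> \<le> d\<^sup>2"
      using key by (simp add: mult.commute)
    also have "\<dots> \<le> (3/2 * h)\<^sup>2"
      using d by (intro power_mono)
    also have "\<dots> \<le> (pi * h)\<^sup>2"
      using h pi_gt3 by (intro power_mono mult_right_mono) auto
    also have "\<dots> \<le> pi * h * u"
      using False h pi_gt_zero by (simp add: power2_eq_square mult_left_mono)
    finally show ?thesis
      using u by (simp add: power2_eq_square mult.assoc[symmetric])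
  qed
  then show ?thesis
    using u by (simp add: u_def[symmetric] le_divide_eq)
qed

lemma eigenvector_overlap_bound:
  fixes A B :: "complex^'n^'n"
  assumes a: "sorted_eigensystem A al a" and b: "sorted_eigensystem B be b"
    and j: "j < CARD('n)" and AB: "spec_norm (A - B) \<le> 3/2 * h"
    and \<gamma>: "2 * h < \<gamma>" and gap: "\<And>k. k < CARD('n) \<Longrightarrow> k \<noteq> j \<Longrightarrow> \<gamma> \<le> \<bar>al j - al k\<bar>"
  shows "1 - pi * h / (\<gamma> - 2 * h) \<le> (cmod (cinner (a j) (b j)))\<^sup>2"
proof -
  note on = sorted_eigensystemD(1)[OF a] and ev = sorted_eigensystemD(2)[OF a]
  let ?s = "(cmod (cinner (a j) (b j)))\<^sup>2" and ?\<delta> = "spec_norm (A - B)"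
  have bj: "B *v b j = complex_of_real (be j) *s b j" "norm (b j) = 1"
    using sorted_eigensystemD(1,2)[OF b] j orthonormal_norm by auto
  have "0 \<le> (\<Sum>k\<in>{..<CARD('n)} - {j}. (cmod (cinner (a k) (b j)))\<^sup>2)"
    by (rule sum_nonneg) simp
  then have s_le_1: "?s \<le> 1"
    unfolding parseval_remove[OF on bj(2) j] by simp
  have h: "0 \<le> h"
    using AB spec_norm_nonneg[of "A - B"] by linarith
  have sep: "\<gamma> - ?\<delta> \<le> \<bar>al k - be j\<bar>" if "k < CARD('n)" "k \<noteq> j" for k
    using gap[OF that] weyl_inequality[OF a b j] by linarith
  have "(\<gamma> - ?\<delta>)\<^sup>2 * (1 - ?s) \<le> ?\<delta>\<^sup>2"
    using AB h \<gamma> by (intro davis_kahan_overlap[OF on ev bj j _ sep]) auto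
  then have "1 - ?s \<le> pi * h / (\<gamma> - 2 * h)"
    using AB h \<gamma> s_le_1 spec_norm_nonneg[of "A - B"] by (intro deficit_le_pi_ratio) auto
  then show ?thesis
    by simp
qed

lemma eigenvector_overlap_gap_bound:
  fixes A B :: "complex^'n^'n"
  assumes a: "sorted_eigensystem A al a" and b: "sorted_eigensystem B be b"
    and j: "j < CARD('n)" and AB: "spec_norm (A - B) \<le> 3/2 * h"
    and gap: "gap CARD('n) al j > ereal (2 * h)"
  shows "ereal ((cmod (cinner (b j) (a j)))\<^sup>2) \<ge> 1 - ereal (pi * h) / (gap CARD('n) al j - ereal (2 * h))"
proof (cases "gap CARD('n) al j")
  case (real \<gamma>)
  have "1 - pi * h / (\<gamma> - 2 * h) \<le> (cmod (cinner (b j) (a j)))\<^sup>2"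
    using gap_le_eigenvalue_dist[where lam = al, OF sorted_eigensystemD(3)[OF a] _ _ j] real gap
    by (subst cmod_cinner_commute) (intro eigenvector_overlap_bound[OF a b j AB]; simp)
  moreover have "1 - ereal x = ereal (1 - x)" for x
    by (simp add: one_ereal_def)
  ultimately show ?thesis
    using real gap by simp
next
  case PInf
  \<comment> \<open>Only possible for 1 x 1 matrices, where the bound is trivial.\<close>
  then have empty: "{..<CARD('n)} - {j} = {}"
    using gap_le_eigenvalue_dist[where lam = al, OF sorted_eigensystemD(3)[OF a] _ _ j] by fastforce
  have "norm (b j) = 1"
    using orthonormal_norm[OF sorted_eigensystemD(1)[OF b] j] .
  then have "(\<Sum>k\<in>{..<CARD('n)} - {j}. (cmod (cinner (a k) (b j)))\<^sup>2) = 1 - (cmod (cinner (a j) (b j)))\<^sup>2"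
    by (rule parseval_remove[OF sorted_eigensystemD(1)[OF a] _ j])
  then have "(cmod (cinner (a j) (b j)))\<^sup>2 = 1"
    unfolding empty by simp
  then show ?thesis
    using PInf by (simp add: cmod_cinner_commute)
next
  case MInf
  then show ?thesis
    using gap by simp
qed

section \<open>The effective Hamiltonian\<close>

lemma mexp_hermitian_near_one:
  fixes H :: "complex^'n^'n"
  assumes h: "hermitian H" and tH: "4 * spec_norm H * \<bar>t\<bar> \<le> 1"
  defines "A \<equiv> cscale (- \<i> * complex_of_real t) H"
  shows "spec_norm (mexp A - mat 1) \<le> 3/8" and "mlog (mexp A) = A"
proof -
  obtain v mu where on: "orthonormal v CARD('n)"
    and ev: "\<And>i. i < CARD('n) \<Longrightarrow> H *v v i = complex_of_real (mu i) *s v i"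
    using hermitian_spectral_theorem[OF h] by blast
  define z where "z i = - \<i> * complex_of_real t * complex_of_real (mu i)" for i
  have evA: "A *v v i = z i *s v i" if "i < CARD('n)" for i
    unfolding A_def z_def by (rule cscale_eigenvector[OF ev[OF that]])
  have z: "cmod (z i) \<le> 1/4" if "i < CARD('n)" for i
  proof -
    have "cmod (z i) = \<bar>t\<bar> * \<bar>mu i\<bar>"
      by (simp add: z_def norm_mult)
    also have "\<dots> \<le> \<bar>t\<bar> * spec_norm H"
      using eigenvalue_le_spec_norm[OF ev[OF that] orthonormal_norm[OF on that]]
      by (intro mult_left_mono) auto
    finally show ?thesis
      using tH by (simp add: algebra_simps)
  qed
  show "spec_norm (mexp A - mat 1) \<le> 3/8"
    using spec_norm_mexp_minus_one[OF on evA z] by simp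
  show "mlog (mexp A) = A"
  proof (rule mlog_mexp[OF on evA])
    show "cmod (z i) \<le> 1/2" if "i < CARD('n)" for i
      using z[OF that] by simp
  qed
qed

lemma effective_hamiltonian_error:
  fixes H U :: "complex^'n^'n"
  assumes h: "hermitian H" and t: "0 < t" and tH: "4 * spec_norm H * t \<le> 1"
    and U: "spec_norm (U - mexp (cscale (- \<i> * complex_of_real t) H)) \<le> \<eta>" and \<eta>: "\<eta> \<le> 1/3"
  shows "spec_norm (cscale (\<i> / complex_of_real t) (mlog U) - H) \<le> 24/7 * \<eta> / t"
proof -
  define A where "A = cscale (- \<i> * complex_of_real t) H"
  have V: "spec_norm (mexp A - mat 1) \<le> 3/8" and logV: "mlog (mexp A) = A"
    using mexp_hermitian_near_one[OF h] tH t unfolding A_def by auto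
  have U1: "spec_norm (U - mat 1) \<le> 17/24"
    using spec_norm_triangle[of "U - mexp A" "mexp A - mat 1"] U V \<eta> unfolding A_def by simp
  have "spec_norm (mlog U - A) \<le> spec_norm (U - mexp A) / (1 - 17/24)"
    using spec_norm_mlog_diff[OF U1, of "mexp A"] V logV by simp
  also have "\<dots> \<le> 24/7 * \<eta>"
    using U unfolding A_def by simp
  finally have log_error: "spec_norm (mlog U - A) \<le> 24/7 * \<eta>" .
  have "cscale (\<i> / complex_of_real t) (mlog U) - H = cscale (\<i> / complex_of_real t) (mlog U - A)"
    using t by (simp add: A_def cscale_diff cscale_cscale cscale_one)
  then have "spec_norm (cscale (\<i> / complex_of_real t) (mlog U) - H) \<le> 1 / t * spec_norm (mlog U - A)"
    using spec_norm_cscale[of "\<i> / complex_of_real t" "mlog U - A"] t by (simp add: norm_divide)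
  also have "\<dots> \<le> 1 / t * (24/7 * \<eta>)"
    using log_error t by (intro mult_left_mono) auto
  finally show ?thesis
    by simp
qed

theorem theorem4:
  fixes H0 Hint Ut :: "complex^'n^'n"
    and lam0 lamt :: "nat \<Rightarrow> real" and phi0 phit :: "nat \<Rightarrow> complex^'n"
    and t \<epsilon> :: real and j :: nat
  assumes "hermitian H0" and "hermitian Hint"
    and "sorted_eigensystem H0 lam0 phi0"
    and "0 < t" and "4 * spec_norm (H0 + Hint) * t \<le> 1"
    and "0 \<le> \<epsilon>" and "\<epsilon> \<le> spec_norm Hint"
    and "unitary Ut"
    and "spec_norm (Ut - mexp (cscale (- \<i> * complex_of_real t) (H0 + Hint))) \<le> t * \<epsilon> / 9"
    and "t * \<epsilon> / 9 \<le> 1 / 3"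
    and "sorted_eigensystem (cscale (\<i> / complex_of_real t) (mlog Ut)) lamt phit"
    and "j < CARD('n)"
    and "gap CARD('n) lam0 j > ereal (2 * spec_norm Hint)"
  shows "ereal ((cmod (cinner (phit j) (phi0 j)))\<^sup>2)
           \<ge> 1 - ereal (pi * spec_norm Hint) / (gap CARD('n) lam0 j - ereal (2 * spec_norm Hint))"
proof -
  let ?Ht = "cscale (\<i> / complex_of_real t) (mlog Ut)"
  have "spec_norm (?Ht - (H0 + Hint)) \<le> 24/7 * (t * \<epsilon> / 9) / t"
    using assms(1,2,4,5,9,10) by (intro effective_hamiltonian_error hermitian_add) auto
  also have "\<dots> \<le> 1/2 * spec_norm Hint"
    using assms(4,6,7) by (simp add: field_simps)
  finally have "spec_norm (H0 - ?Ht) \<le> 3/2 * spec_norm Hint"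
    using spec_norm_triangle[of "?Ht - (H0 + Hint)" Hint] spec_norm_minus_commute[of H0 ?Ht]
    by (simp add: algebra_simps)
  then show ?thesis
    using eigenvector_overlap_gap_bound[OF assms(3,11,12)] assms(13) by blast
qed

end
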